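(* Let $0<\omega_1<\omega_2<\cdots$, let $(c_j)$ be a real square-summable sequence, $\gamma>0$, and let $$f(\lambda)=\sum_{j=1}^\infty\frac{c_j^2}{\omega_j}\Big(\frac1{\lambda-i\omega_j}-\frac1{\lambda+i\omega_j}\Big)+\frac{2i}{\gamma\lambda}.$$ Fix $k\ge2$ with $\omega_{k+1}-\omega_k>\omega_k-\omega_{k-1}>0$, set $R_0=\omega_k-\omega_{k-1}$, and let $F(\lambda)=(\lambda-i\omega_k)f(\lambda)$, which (after removing the removable singularity at $i\omega_k$) is analytic on $\{|\lambda-i\omega_k|<R_0\}$. Define $\lambda_k^*=i\omega_k-\frac{F(i\omega_k)}{F'(i\omega_k)}$ and, for $|\lambda-i\omega_k|<R_0$, the analytic function $\rho$ by $F(\lambda)=F(i\omega_k)+(\lambda-i\omega_k)F'(i\omega_k)+(\lambda-i\omega_k)^2\rho(\lambda)$. Let $0<R_1<R_0$, $\Gamma_1=\{|\lambda-i\omega_k|\le R_1\}$, $M=\sup_{\lambda\in\Gamma_1}|\rho(\lambda)|$, and let $R_k>0$ be such that the open disk $\Gamma=\{|\lambda-\lambda_k^*|<R_k\}$ satisfies $\Gamma\subset\Gamma_1$. Assume $$0<M<\frac{|F'(i\omega_k)|^2}{4|F(i\omega_k)|}.$$ Let $b=\sqrt{\frac{|F'(i\omega_k)|}{4M}}$ and $c_*=|\lambda_k^*-i\omega_k|=\Big|\frac{F(i\omega_k)}{F'(i\omega_k)}\Big|$. If $\sqrt{R_k}\in\big(b-\sqrt{b^2-c_*},\,b+\sqrt{b^2-c_*}\big)$,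 then $f$ has exactly one zero in $\Gamma$.
   Context: Zeros of $f$ (outside $\{0,\pm i\omega_j\}$) are the eigenvalues of the observer-error generator considered in the paper. *)

theory Defs
  imports "HOL-Complex_Analysis.Complex_Analysis"
begin

text \<open>Sequences omega and c are indexed from 1; the values at index 0 are unused.
  The function f of the paper:
  f(l) = sum_{j>=1} c_j^2/omega_j (1/(l - i omega_j) - 1/(l + i omega_j)) + 2i/(gamma l).\<close>
definition obs_f :: "(nat \<Rightarrow> real) \<Rightarrow> (nat \<Rightarrow> real) \<Rightarrow> real \<Rightarrow> complex \<Rightarrow> complex" where
  "obs_f \<omega> c \<gamma> l =
     (\<Sum>j. complex_of_real (c (Suc j) ^ 2 / \<omega> (Suc j)) *
            (1 / (l - \<i> * complex_of_real (\<omega> (Suc j))) - 1 / (l + \<i> * complex_of_real (\<omega> (Suc j)))))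
     + 2 * \<i> / (complex_of_real \<gamma> * l)"

definition obs_poles :: "(nat \<Rightarrow> real) \<Rightarrow> complex set" where
  "obs_poles \<omega> = {0} \<union> {\<i> * complex_of_real (\<omega> j) | j. j \<ge> 1} \<union> {- \<i> * complex_of_real (\<omega> j) | j. j \<ge> 1}"

end

theory Submission imports Defs begin

text \<open>Near \<open>\<i> \<omega>\<^sub>k\<close> the only excluded point is \<open>\<i> \<omega>\<^sub>k\<close> itself, and \<open>F(\<i> \<omega>\<^sub>k) \<noteq> 0\<close>, so the zeros
  of \<open>f\<close> in \<open>\<Gamma>\<close> are exactly the zeros of \<open>F\<close> there. On the circle \<open>\<partial>\<Gamma>\<close>, \<open>F\<close> differs from its
  Newton linearisation \<open>F'(\<i> \<omega>\<^sub>k) (\<lambda> - \<lambda>\<^sub>k\<^sup>*)\<close> by \<open>(\<lambda> - \<i> \<omega>\<^sub>k)\<^sup>2 \<rho>(\<lambda>)\<close>, of modulus at most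
  \<open>M (R\<^sub>k + c\<^sub>*)\<^sup>2\<close>, and the condition on \<open>\<surd>R\<^sub>k\<close> says precisely that this is less than
  \<open>|F'(\<i> \<omega>\<^sub>k)| R\<^sub>k\<close>, the modulus of the linearisation there. By Rouche's theorem \<open>F\<close> has as
  many zeros in \<open>\<Gamma>\<close>, counted with multiplicity, as the linearisation: exactly one.\<close>

lemma sum_ge_1_eq_1_imp_ex1:
  fixes h :: "'a \<Rightarrow> int"
  assumes "finite A" and "\<And>x. x \<in> A \<Longrightarrow> 1 \<le> h x" and "sum h A = 1"
  shows "\<exists>!x. x \<in> A"
proof -
  have "int (card A) \<le> sum h A"
    using sum_mono[of A "\<lambda>_. 1" h] assms(2) by simp
  moreover have "A \<noteq> {}"
    using assms(3) by auto
  ultimately have "card A = 1"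
    using assms(1,3) by (simp add: Suc_leI card_gt_0_iff le_antisym)
  then obtain a where "A = {a}"
    by (rule card_1_singletonE)
  then show ?thesis
    by blast
qed

lemma norm_le_SUP_if_continuous_on_compact:
  fixes f :: "'a::topological_space \<Rightarrow> 'b::real_normed_vector"
  assumes "compact K" "continuous_on K f" "x \<in> K"
  shows "norm (f x) \<le> (SUP y\<in>K. norm (f y))"
proof -
  have "compact ((\<lambda>y. norm (f y)) ` K)"
    using assms(1,2) by (intro compact_continuous_image continuous_intros)
  then have "bdd_above ((\<lambda>y. norm (f y)) ` K)"
    by (intro bounded_imp_bdd_above compact_imp_bounded)
  then show ?thesis
    by (rule cSUP_upper[OF assms(3)])
qed

lemma not_constant_if_close_to_linear:
  fixes G :: "complex \<Rightarrow> complex"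
  assumes r: "0 < r" and sub: "cball z0 r \<subseteq> S"
    and close: "\<And>z. z \<in> sphere z0 r \<Longrightarrow> norm (G z - B * (z - z0)) < norm B * r"
  shows "\<not> G constant_on S"
proof
  assume "G constant_on S"
  then obtain c where c: "\<And>z. z \<in> S \<Longrightarrow> G z = c"
    by (auto simp: constant_on_def)
  define w where "w = B * complex_of_real r"
  have "z0 + r \<in> S" "z0 - r \<in> S"
    using sub r by (auto simp: dist_norm)
  then have "norm (c - w) < norm B * r" "norm (c + w) < norm B * r"
    using close[of "z0 + r"] close[of "z0 - r"] c r by (auto simp: w_def dist_norm algebra_simps)
  \<comment> \<open>but \<open>c \<plusminus> w\<close> cannot both lie within \<open>|w|\<close> of \<open>0\<close>\<close>
  moreover have "norm (2 * w) \<le> norm (c + w) + norm (c - w)"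
    using norm_triangle_ineq4[of "c + w" "c - w"] by simp
  ultimately show False
    using r by (simp add: w_def norm_mult)
qed

lemma winding_zorder_sum_eq_1_if_close_to_linear:
  fixes G :: "complex \<Rightarrow> complex"
  assumes holo: "G holomorphic_on S" and S: "open S" "connected S" "finite {p \<in> S. G p = 0}"
    and r: "0 < r" "cball z0 r \<subseteq> S" and B: "B \<noteq> 0"
    and close: "\<And>z. z \<in> sphere z0 r \<Longrightarrow> norm (G z - B * (z - z0)) < norm B * r"
  shows "(\<Sum>p\<in>{p \<in> S. G p = 0}. winding_number (circlepath z0 r) p * zorder G p) = 1"
proof -
  define \<gamma> where "\<gamma> = circlepath z0 r"
  define lin where "lin = (\<lambda>z. B * (z - z0))"
  have "(\<Sum>p\<in>{p \<in> S. lin p + (G p - lin p) = 0}. winding_number \<gamma> p * zorder (\<lambda>p. lin p + (G p - lin p)) p)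
      = (\<Sum>p\<in>{p \<in> S. lin p = 0}. winding_number \<gamma> p * zorder lin p)"
  proof (rule Rouche_theorem)
    show "finite {p \<in> S. lin p = 0}"
      by (auto simp: lin_def B)
    show "lin holomorphic_on S" "(\<lambda>p. G p - lin p) holomorphic_on S"
      using holo unfolding lin_def by (intro holomorphic_intros)+
    show "\<forall>z\<in>path_image \<gamma>. norm (G z - lin z) < norm (lin z)"
      using close r by (auto simp: \<gamma>_def lin_def norm_mult dist_norm norm_minus_commute)
    show "\<forall>z. z \<notin> S \<longrightarrow> winding_number \<gamma> z = 0"
    proof (intro allI impI)
      fix z
      assume "z \<notin> S"
      then show "winding_number \<gamma> z = 0"
        using r by (intro winding_number_zero_outside[of _ "cball z0 r"]) (auto simp: \<gamma>_def valid_path_imp_path)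
    qed
    show "finite {p \<in> S. lin p + (G p - lin p) = 0}"
      using S(3) by simp
    show "valid_path \<gamma>" "pathfinish \<gamma> = pathstart \<gamma>"
      by (simp_all add: \<gamma>_def)
    show "path_image \<gamma> \<subseteq> S"
      using r by (auto simp: \<gamma>_def)
  qed (use S in simp_all)
  moreover have "{p \<in> S. lin p = 0} = {z0}"
    using r B by (auto simp: lin_def)
  moreover have "zorder lin z0 = 1"
    by (rule zorder_eqI[of UNIV _ "\<lambda>_. B"]) (auto simp: lin_def B)
  ultimately show ?thesis
    using r by (simp add: winding_number_circlepath_centre \<gamma>_def)
qed

lemma zorder_sum_eq_1_if_close_to_linear:
  fixes G :: "complex \<Rightarrow> complex"
  assumes holo: "G holomorphic_on ball z0 R" and r: "0 < r" "r < R" and B: "B \<noteq> 0"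
    and close: "\<And>z. z \<in> sphere z0 r \<Longrightarrow> norm (G z - B * (z - z0)) < norm B * r"
  shows "finite {z \<in> ball z0 r. G z = 0}" "(\<Sum>p\<in>{z \<in> ball z0 r. G z = 0}. zorder G p) = 1"
proof -
  \<comment> \<open>Rouche's theorem needs finitely many zeros, which holds on a disc compactly
    inside \<open>ball z0 R\<close>.\<close>
  define S where "S = ball z0 ((r + R) / 2)"
  have S: "cball z0 r \<subseteq> S" "cball z0 ((r + R) / 2) \<subseteq> ball z0 R"
    using r by (auto simp: S_def)
  have "\<not> G constant_on ball z0 R"
    using r by (intro not_constant_if_close_to_linear[OF r(1) _ close]) auto
  then have "finite {p \<in> cball z0 ((r + R) / 2). G p = 0}"
    using S by (intro holomorphic_compact_finite_zeros[OF holo open_ball connected_ball]) auto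
  then have fin_S: "finite {p \<in> S. G p = 0}"
    by (rule rev_finite_subset) (auto simp: S_def)
  then show "finite {z \<in> ball z0 r. G z = 0}"
    by (rule rev_finite_subset) (use S in auto)
  have "G holomorphic_on S"
    by (rule holomorphic_on_subset[OF holo]) (use S(2) in \<open>auto simp: S_def\<close>)
  then have rouche: "(\<Sum>p\<in>{p \<in> S. G p = 0}. winding_number (circlepath z0 r) p * zorder G p) = 1"
    by (rule winding_zorder_sum_eq_1_if_close_to_linear[OF _ _ _ fin_S r(1) S(1) B close])
      (simp_all add: S_def)
  have winding: "winding_number (circlepath z0 r) p = (if p \<in> ball z0 r then 1 else 0)"
    if "G p = 0" for p
  proof -
    have "p \<notin> sphere z0 r"
      using close[of p] that by (auto simp: norm_mult dist_norm norm_minus_commute)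
    then consider "p \<in> ball z0 r" | "p \<notin> cball z0 r"
      by fastforce
    then show ?thesis
    proof cases
      case 1
      then show ?thesis
        using winding_number_circlepath[of p z0 r] by (simp add: dist_norm norm_minus_commute)
    next
      case 2
      then have "winding_number (circlepath z0 r) p = 0"
        using r by (intro winding_number_zero_outside[of _ "cball z0 r"]) (auto simp: valid_path_imp_path)
      with 2 show ?thesis
        by simp
    qed
  qed
  have "(\<Sum>p\<in>{p \<in> S. G p = 0} \<inter> ball z0 r. of_int (zorder G p))
      = (\<Sum>p\<in>{p \<in> S. G p = 0}. winding_number (circlepath z0 r) p * zorder G p)"
    unfolding sum.inter_restrict[OF fin_S] by (rule sum.cong) (auto simp: winding)
  moreover have "{p \<in> S. G p = 0} \<inter> ball z0 r = {z \<in> ball z0 r. G z = 0}"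
    using S by auto
  ultimately have "of_int (\<Sum>p\<in>{z \<in> ball z0 r. G z = 0}. zorder G p) = (1 :: complex)"
    using rouche by simp
  then show "(\<Sum>p\<in>{z \<in> ball z0 r. G z = 0}. zorder G p) = 1"
    by (simp only: of_int_eq_1_iff)
qed

lemma unique_zero_if_close_to_linear:
  fixes G :: "complex \<Rightarrow> complex"
  assumes holo: "G holomorphic_on ball z0 R" and r: "0 < r" "r < R" and B: "B \<noteq> 0"
    and close: "\<And>z. z \<in> sphere z0 r \<Longrightarrow> norm (G z - B * (z - z0)) < norm B * r"
  shows "\<exists>!z. z \<in> ball z0 r \<and> G z = 0"
proof -
  have nonzero: "G (z0 + r) \<noteq> 0" "z0 + r \<in> ball z0 R"
    using close[of "z0 + r"] r by (auto simp: dist_norm norm_mult)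
  have zorder_pos: "1 \<le> zorder G p" if "p \<in> ball z0 r" "G p = 0" for p
  proof -
    have p: "p \<in> ball z0 R"
      using that r by auto
    have "\<forall>\<^sub>F w in at p. G w \<noteq> 0 \<and> w \<in> ball z0 R"
      by (rule non_zero_neighbour_alt[OF holo open_ball connected_ball p nonzero(2,1)])
    then have "\<forall>\<^sub>F w in at p. G w \<noteq> 0"
      by (rule eventually_mono) simp
    then have "frequently (\<lambda>w. G w \<noteq> 0) (at p)"
      by (rule eventually_frequently[rotated]) simp
    then have "0 < zorder G p"
      using zorder_pos_iff[OF holo open_ball p] that(2) by simp
    then show ?thesis
      by simp
  qed
  have "\<exists>!z. z \<in> {z \<in> ball z0 r. G z = 0}"
    using zorder_sum_eq_1_if_close_to_linear[OF assms] zorder_pos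
    by (intro sum_ge_1_eq_1_imp_ex1[of _ "zorder G"]) auto
  then show ?thesis
    by simp
qed

lemma quadratic_bound_if_sqrt_between_roots:
  fixes M \<beta> c r b :: real
  assumes "0 < M" "0 \<le> \<beta>" "0 \<le> c" "0 < r" and b: "b = sqrt (\<beta> / (4 * M))"
    and between: "b - sqrt (b\<^sup>2 - c) < sqrt r" "sqrt r < b + sqrt (b\<^sup>2 - c)"
  shows "M * (r + c)\<^sup>2 < \<beta> * r"
proof -
  have b2: "b\<^sup>2 = \<beta> / (4 * M)"
    using assms(1,2) b by simp
  have dist_lt: "\<bar>sqrt r - b\<bar> < sqrt (b\<^sup>2 - c)"
    using between by (simp add: abs_less_iff)
  then have "0 < sqrt (b\<^sup>2 - c)"
    using abs_ge_zero[of "sqrt r - b"] by linarith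
  moreover have "\<bar>sqrt r - b\<bar>\<^sup>2 < (sqrt (b\<^sup>2 - c))\<^sup>2"
    by (rule power_strict_mono[OF dist_lt]) auto
  ultimately have "(sqrt r - b)\<^sup>2 < b\<^sup>2 - c"
    by simp
  \<comment> \<open>\<open>b \<plusminus> sqrt (b\<^sup>2 - c)\<close> are the roots of \<open>s\<^sup>2 - 2 b s + c\<close>, which is therefore
    negative at \<open>s = sqrt r\<close>.\<close>
  then have "r + c < 2 * b * sqrt r"
    using assms(4) by (simp add: power2_eq_square algebra_simps)
  then have "(r + c)\<^sup>2 < (2 * b * sqrt r)\<^sup>2"
    using assms(3,4) by (intro power_strict_mono) auto
  also have "\<dots> = \<beta> * r / M"
    using assms(1,4) b2 by (simp add: power_mult_distrib)
  finally show ?thesis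
    using assms(1) by (simp add: field_simps)
qed

lemma linearization_error_on_sphere:
  fixes F \<rho> :: "complex \<Rightarrow> complex" and a A B :: complex
  assumes expand: "\<And>z. z \<in> cball a R \<Longrightarrow> F z = A + (z - a) * B + (z - a)\<^sup>2 * \<rho> z"
    and bound: "\<And>z. z \<in> cball a R \<Longrightarrow> norm (\<rho> z) \<le> M"
    and B: "B \<noteq> 0" and sub: "cball (a - A / B) r \<subseteq> cball a R" and z: "z \<in> sphere (a - A / B) r"
  shows "norm (F z - B * (z - (a - A / B))) \<le> M * (r + norm (A / B))\<^sup>2"
proof -
  have zR: "z \<in> cball a R"
    using sub z by auto
  have "norm (z - a) \<le> norm (z - (a - A / B)) + norm (A / B)"
    using norm_triangle_ineq[of "z - (a - A / B)" "- (A / B)"] by simp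
  also have "\<dots> = r + norm (A / B)"
    using z by (simp add: dist_norm norm_minus_commute)
  finally have "norm (z - a) \<le> r + norm (A / B)" .
  moreover have "F z - B * (z - (a - A / B)) = (z - a)\<^sup>2 * \<rho> z"
    using expand[OF zR] B by (simp add: algebra_simps)
  ultimately show ?thesis
    using bound[OF zR] by (simp add: norm_mult norm_power mult_mono' power_mono mult.commute)
qed

lemma unique_zero_near_newton_point:
  fixes F \<rho> :: "complex \<Rightarrow> complex" and a A B :: complex
  assumes holo: "F holomorphic_on ball a R"
    and expand: "\<And>z. z \<in> cball a R1 \<Longrightarrow> F z = A + (z - a) * B + (z - a)\<^sup>2 * \<rho> z"
    and bound: "\<And>z. z \<in> cball a R1 \<Longrightarrow> norm (\<rho> z) \<le> M"
    and R1: "R1 < R" and B: "B \<noteq> 0" and r: "0 < r" and sub: "cball (a - A / B) r \<subseteq> cball a R1"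
    and margin: "M * (r + norm (A / B))\<^sup>2 < norm B * r"
  shows "\<exists>!z. z \<in> ball (a - A / B) r \<and> F z = 0"
proof -
  have "ball (a - A / B) (r + (R - R1)) \<subseteq> ball a R"
    using sub r by (simp add: cball_subset_cball_iff ball_subset_ball_iff)
  then have "F holomorphic_on ball (a - A / B) (r + (R - R1))"
    using holo by (rule holomorphic_on_subset[rotated])
  moreover have "norm (F z - B * (z - (a - A / B))) < norm B * r" if "z \<in> sphere (a - A / B) r" for z
    using linearization_error_on_sphere[OF expand bound B sub that] margin by linarith
  ultimately show ?thesis
    using R1 r by (intro unique_zero_if_close_to_linear[OF _ _ _ B]) auto
qed

lemma le_if_Suc_less_from_1:
  fixes \<omega> :: "nat \<Rightarrow> 'a::order"
  assumes "\<And>j. 1 \<le> j \<Longrightarrow> \<omega> j < \<omega> (Suc j)" and "1 \<le> i" "i \<le> j"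
  shows "\<omega> i \<le> \<omega> j"
proof -
  have "\<omega> (Suc n) \<le> \<omega> (Suc (Suc n))" for n
    using assms(1)[of "Suc n"] by simp
  then show ?thesis
    using lift_Suc_mono_le[of "\<lambda>n. \<omega> (Suc n)" "i - 1" "j - 1"] assms(2,3) by simp
qed

lemma obs_poles_inter_ball:
  fixes \<omega> :: "nat \<Rightarrow> real"
  assumes pos: "0 < \<omega> 1" and incr: "\<And>j. j \<ge> 1 \<Longrightarrow> \<omega> j < \<omega> (Suc j)" and k: "2 \<le> k"
    and r: "0 < r" and left: "r \<le> \<omega> k - \<omega> (k - 1)" and right: "r \<le> \<omega> (Suc k) - \<omega> k"
  shows "obs_poles \<omega> \<inter> ball (\<i> * \<omega> k) r = {\<i> * \<omega> k}"
proof
  show "{\<i> * \<omega> k} \<subseteq> obs_poles \<omega> \<inter> ball (\<i> * \<omega> k) r"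
    using k r by (auto simp: obs_poles_def)
next
  show "obs_poles \<omega> \<inter> ball (\<i> * \<omega> k) r \<subseteq> {\<i> * \<omega> k}"
  proof
    fix z
    assume z: "z \<in> obs_poles \<omega> \<inter> ball (\<i> * \<omega> k) r"
    have mono: "\<omega> i \<le> \<omega> j" if "1 \<le> i" "i \<le> j" for i j
      using incr that by (rule le_if_Suc_less_from_1)
    have "0 < \<omega> (k - 1)"
      using mono[of 1 "k - 1"] pos k by linarith
    have dist_ii: "dist (\<i> * complex_of_real x) (\<i> * complex_of_real y) = \<bar>x - y\<bar>" for x y
      by (simp add: dist_norm norm_mult flip: right_diff_distrib of_real_diff)
    from z consider "z = 0" | j where "1 \<le> j" "z = \<i> * \<omega> j" | j where "1 \<le> j" "z = \<i> * (- \<omega> j)"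
      unfolding obs_poles_def by auto
    then show "z \<in> {\<i> * \<omega> k}"
    proof cases
      case 1
      then show ?thesis
        using z left \<open>0 < \<omega> (k - 1)\<close> by (simp add: norm_mult abs_less_iff)
    next
      case (2 j)
      then have dist_j: "\<bar>\<omega> k - \<omega> j\<bar> < r"
        using z dist_ii by simp
      consider "j < k" | "j = k" | "k < j"
        by linarith
      then show ?thesis
      proof cases
        case 1
        then have "\<omega> j \<le> \<omega> (k - 1)"
          using mono[of j "k - 1"] \<open>1 \<le> j\<close> by simp
        then show ?thesis
          using dist_j left by linarith
      next
        case 3
        then have "\<omega> (Suc k) \<le> \<omega> j"
          using mono[of "Suc k" j] by simp
        then show ?thesis
          using dist_j right by linarith
      qed (simp add: 2)
    next
      case (3 j)
      then have "\<bar>\<omega> k + \<omega> j\<bar> < r"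
        using z dist_ii[of "\<omega> k" "- \<omega> j"] by simp
      moreover have "0 < \<omega> j"
        using mono[of 1 j] pos \<open>1 \<le> j\<close> by simp
      ultimately show ?thesis
        using left \<open>0 < \<omega> (k - 1)\<close> by simp
    qed
  qed
qed

lemma zero_iff_zero_of_pole_removal:
  fixes F f :: "complex \<Rightarrow> complex" and P :: "complex set"
  assumes F_eq: "\<And>l. l \<in> ball a R \<Longrightarrow> l \<noteq> a \<Longrightarrow> F l = (l - a) * f l"
    and "F a \<noteq> 0" and "P \<inter> ball a R = {a}" and "z \<in> ball a R"
  shows "(z \<notin> P \<and> f z = 0) \<longleftrightarrow> F z = 0"
  using assms by (cases "z = a") auto

theorem lemma3p1:
  fixes \<omega> c :: "nat \<Rightarrow> real" and \<gamma> :: real and k :: nat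
    and F \<rho> :: "complex \<Rightarrow> complex"
    and R0 R1 Rk M b cst :: real and lstar :: complex
  assumes omega_pos: "0 < \<omega> 1"
    and omega_incr: "\<And>j. j \<ge> 1 \<Longrightarrow> \<omega> j < \<omega> (Suc j)"
    and c_sq_summable: "summable (\<lambda>j. (c (Suc j))\<^sup>2)"
    and gamma_pos: "\<gamma> > 0"
    and k_ge: "k \<ge> 2"
    and gaps: "\<omega> (Suc k) - \<omega> k > \<omega> k - \<omega> (k - 1)" "\<omega> k - \<omega> (k - 1) > 0"
    and R0_def: "R0 = \<omega> k - \<omega> (k - 1)"
    and F_holo: "F holomorphic_on ball (\<i> * \<omega> k) R0"
    and F_eq: "\<And>l. l \<in> ball (\<i> * \<omega> k) R0 \<Longrightarrow> l \<noteq> \<i> * \<omega> k \<Longrightarrow>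
                  F l = (l - \<i> * \<omega> k) * obs_f \<omega> c \<gamma> l"
    and lstar_def: "lstar = \<i> * \<omega> k - F (\<i> * \<omega> k) / deriv F (\<i> * \<omega> k)"
    and rho_holo: "\<rho> holomorphic_on ball (\<i> * \<omega> k) R0"
    and rho_eq: "\<And>l. l \<in> ball (\<i> * \<omega> k) R0 \<Longrightarrow>
                  F l = F (\<i> * \<omega> k) + (l - \<i> * \<omega> k) * deriv F (\<i> * \<omega> k)
                        + (l - \<i> * \<omega> k)\<^sup>2 * \<rho> l"
    and R1: "0 < R1" "R1 < R0"
    and M_def: "M = (SUP l\<in>cball (\<i> * \<omega> k) R1. norm (\<rho> l))"
    and Rk_pos: "Rk > 0"
    and Gamma_sub: "ball lstar Rk \<subseteq> cball (\<i> * \<omega> k) R1"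
    and M_bounds: "0 < M" "M < (norm (deriv F (\<i> * \<omega> k)))\<^sup>2 / (4 * norm (F (\<i> * \<omega> k)))"
    and b_def: "b = sqrt (norm (deriv F (\<i> * \<omega> k)) / (4 * M))"
    and cst_def: "cst = norm (F (\<i> * \<omega> k) / deriv F (\<i> * \<omega> k))"
    and Rk_range: "b - sqrt (b\<^sup>2 - cst) < sqrt Rk" "sqrt Rk < b + sqrt (b\<^sup>2 - cst)"
  shows "\<exists>!z. z \<in> ball lstar Rk \<and> z \<notin> obs_poles \<omega> \<and> obs_f \<omega> c \<gamma> z = 0"
proof -
  define a where "a = \<i> * complex_of_real (\<omega> k)"
  define A B where "A = F a" and "B = deriv F a"
  have lstar_eq: "lstar = a - A / B" and cst_eq: "cst = norm (A / B)"
    using lstar_def cst_def by (simp_all add: a_def A_def B_def)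
  \<comment> \<open>otherwise the upper bound on \<open>M\<close> would be \<open>0\<close>, as \<open>x / 0 = 0\<close>\<close>
  have F_a_nonzero: "F a \<noteq> 0" and B_nonzero: "B \<noteq> 0"
    using M_bounds by (auto simp: a_def B_def)
  have cball_R1: "cball a R1 \<subseteq> ball a R0"
    using R1 by auto
  have Gamma_closed: "cball lstar Rk \<subseteq> cball a R1"
    using closure_mono[OF Gamma_sub] Rk_pos by (simp add: a_def)
  have "continuous_on (cball a R1) \<rho>"
    using holomorphic_on_imp_continuous_on[OF rho_holo[folded a_def]] cball_R1
    by (rule continuous_on_subset)
  then have rho_bound: "norm (\<rho> z) \<le> M" if "z \<in> cball a R1" for z
    unfolding M_def a_def[symmetric] using that by (intro norm_le_SUP_if_continuous_on_compact) auto
  have expand: "F z = A + (z - a) * B + (z - a)\<^sup>2 * \<rho> z" if "z \<in> cball a R1" for z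
    using rho_eq[folded a_def] cball_R1 that unfolding A_def B_def by blast
  have "0 \<le> cst"
    by (simp add: cst_def)
  from quadratic_bound_if_sqrt_between_roots[OF M_bounds(1) norm_ge_zero this Rk_pos b_def Rk_range]
  have margin: "M * (Rk + norm (A / B))\<^sup>2 < norm B * Rk"
    by (simp add: a_def B_def cst_eq)
  have unique: "\<exists>!z. z \<in> ball lstar Rk \<and> F z = 0"
    unfolding lstar_eq
    by (rule unique_zero_near_newton_point[OF F_holo[folded a_def] expand rho_bound R1(2) B_nonzero Rk_pos])
      (use Gamma_closed margin lstar_eq in simp_all)
  have "obs_poles \<omega> \<inter> ball a R0 = {a}"
    using obs_poles_inter_ball[of \<omega> k R0, OF omega_pos omega_incr k_ge] gaps R0_def
    by (simp add: a_def)
  then have "(z \<notin> obs_poles \<omega> \<and> obs_f \<omega> c \<gamma> z = 0) \<longleftrightarrow> F z = 0" if "z \<in> ball lstar Rk" for z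
    using zero_iff_zero_of_pole_removal[of a R0 F, OF F_eq[folded a_def] F_a_nonzero] that Gamma_closed cball_R1
    by (meson ball_subset_cball subsetD)
  with unique show ?thesis
    by metis
qed

end
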